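(* For every integer $n\geqslant 1$, let $G_n$ be the complete directed graph on $n$ vertices (vertex set $[n]$, with a directed edge $\overrightarrow{xy}$ for every ordered pair $x\neq y$). Then for all $k=0,1,\ldots,n-1$, $$h_k(\Delta(G_n))={n-1\choose k}(n-1)^k .$$
   Context: For a finite directed graph $D$ (no loops, no multiple edges), the complex of directed trees $\Delta(D)$ is the simplicial complex whose vertices are the directed edges of $D$ and whose faces are the sets of directed edges of $D$ forming a directed forest, i.e. a vertex-disjoint union of rooted directed trees (a rooted directed tree with root $r$ is an acyclic digraph in which every vertex is reached from $r$ by a unique directed path); equivalently, a set of edges in which every vertex has in-degree at most $1$ and there is no directed cycle. For a $d$-dimensional simplicial complex $\Delta$ with $f_i$ faces of dimension $i$ ($f_{-1}=1$), the $h$-vector $(h_0,\ldots,h_{d+1})$ is defined by $h_k=\sum_{i=0}^{k}(-1)^{k-i}{d+1-i\choose d+1-k}f_{i-1}$. The complex $\Delta(G_n)$ has dimension $n-2$. *)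

theory Defs
  imports Main
begin

text \<open>A finite digraph is represented by its set of directed edges; an edge (x,y) goes from x to y.\<close>

definition complete_digraph :: "nat \<Rightarrow> (nat \<times> nat) set" where
  "complete_digraph n = {(x, y). x \<in> {1..n} \<and> y \<in> {1..n} \<and> x \<noteq> y}"

definition is_directed_forest :: "('a \<times> 'a) set \<Rightarrow> bool" where
  "is_directed_forest F \<longleftrightarrow> (\<forall>y. card {x. (x, y) \<in> F} \<le> 1 \<and> finite {x. (x, y) \<in> F}) \<and> acyclic F"

definition complex_of_directed_trees :: "('a \<times> 'a) set \<Rightarrow> ('a \<times> 'a) set set" where
  "complex_of_directed_trees D = {F. F \<subseteq> D \<and> is_directed_forest F}"

text \<open>f_{i-1}: number of faces with i vertices (i.e. of dimension i-1).\<close>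
definition face_count :: "'v set set \<Rightarrow> nat \<Rightarrow> nat" where
  "face_count K i = card {F \<in> K. card F = i}"

definition dim_plus_one :: "'v set set \<Rightarrow> nat" where
  "dim_plus_one K = Max (card ` K)"

definition h_vector :: "'v set set \<Rightarrow> nat \<Rightarrow> int" where
  "h_vector K k = (\<Sum>i = 0..k. (-1) ^ (k - i) * int ((dim_plus_one K - i) choose (dim_plus_one K - k))
                      * int (face_count K i))"

end

theory Submission
  imports Defs
begin

text \<open>A directed forest on \<open>n\<close> vertices with \<open>i\<close> edges has \<open>n - i\<close> roots, and adding an edge
  \<open>x \<rightarrow> y\<close> keeps it a forest exactly when \<open>y\<close> is a root and \<open>x\<close> is not in the tree of \<open>y\<close>. As the
  trees partition the vertices, there are \<open>n (n - i) - n = n (n - 1 - i)\<close> such edges. Counting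
  pairs (forest, one of its edges) in two ways, the number \<open>f(i)\<close> of forests with \<open>i\<close> edges satisfies
  \<open>(i + 1) f(i + 1) = n (n - 1 - i) f(i)\<close>, so \<open>f(i) = C(n - 1, i) n\<^sup>i\<close>. Substituting into the
  definition of the h-vector, the binomial theorem gives \<open>h\<^sub>k = C(n - 1, k) (n - 1)\<^sup>k\<close>.\<close>

lemma card_le_one_finite_iff: "card S \<le> 1 \<and> finite S \<longleftrightarrow> (\<forall>x\<in>S. \<forall>y\<in>S. x = y)"
proof
  assume "card S \<le> 1 \<and> finite S"
  then show "\<forall>x\<in>S. \<forall>y\<in>S. x = y"
    using card_le_Suc0_iff_eq by (metis One_nat_def)
next
  assume "\<forall>x\<in>S. \<forall>y\<in>S. x = y"
  then have "S = {} \<or> (\<exists>x. S = {x})" by blast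
  then show "card S \<le> 1 \<and> finite S" by auto
qed

lemma is_directed_forest_iff: "is_directed_forest F \<longleftrightarrow> inj_on snd F \<and> acyclic F"
proof -
  have "inj_on snd F \<longleftrightarrow> (\<forall>y. \<forall>x\<in>{x. (x, y) \<in> F}. \<forall>x'\<in>{x. (x, y) \<in> F}. x = x')"
    by (force simp: inj_on_def)
  then show ?thesis
    unfolding is_directed_forest_def card_le_one_finite_iff by blast
qed

lemma is_directed_forest_subset:
  "is_directed_forest F \<Longrightarrow> G \<subseteq> F \<Longrightarrow> is_directed_forest G"
  by (auto simp: is_directed_forest_iff intro: inj_on_subset acyclic_subset)

lemma is_directed_forest_empty: "is_directed_forest {}"
  by (simp add: is_directed_forest_iff acyclic_def)

lemma is_directed_forest_insert:
  assumes "is_directed_forest F" "(x, y) \<notin> F"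
  shows "is_directed_forest (insert (x, y) F) \<longleftrightarrow> y \<notin> snd ` F \<and> (y, x) \<notin> F\<^sup>*"
  using assms by (auto simp: is_directed_forest_iff acyclic_insert)

lemma wf_directed_forest: "is_directed_forest F \<Longrightarrow> finite F \<Longrightarrow> wf F"
  by (simp add: is_directed_forest_iff finite_acyclic_wf)

lemma directed_forest_root_exists:
  assumes "is_directed_forest F" "F \<subseteq> V \<times> V" "finite V" "v \<in> V"
  shows "\<exists>r \<in> V - snd ` F. (r, v) \<in> F\<^sup>*"
proof -
  have "wf F"
    using assms(1-3) wf_directed_forest finite_subset by blast
  then show ?thesis
    using assms(4)
  proof (induction v rule: wf_induct_rule)
    case (less v)
    show ?case
    proof (cases "v \<in> snd ` F")
      case True
      then obtain p where p: "(p, v) \<in> F" by force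
      with assms(2) less.IH obtain r where "r \<in> V - snd ` F" "(r, p) \<in> F\<^sup>*" by blast
      with p show ?thesis by (meson rtrancl_into_rtrancl)
    qed (use less.prems in blast)
  qed
qed

lemma directed_forest_root_unique:
  assumes "is_directed_forest F" "finite F"
  shows "(r, v) \<in> F\<^sup>* \<Longrightarrow> (r', v) \<in> F\<^sup>* \<Longrightarrow> r \<notin> snd ` F \<Longrightarrow> r' \<notin> snd ` F \<Longrightarrow> r = r'"
proof (induction v arbitrary: r r' rule: wf_induct_rule[OF wf_directed_forest[OF assms]])
  case (1 v)
  from "1.prems"(1) show ?case
  proof (cases rule: rtranclE)
    case base
    with "1.prems"(2,3) show ?thesis by (cases rule: rtranclE) force+
  next
    case (step y)
    note y = this
    from "1.prems"(2) show ?thesis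
    proof (cases rule: rtranclE)
      case base
      with y "1.prems"(4) show ?thesis by force
    next
      case (step y')
      have inj: "inj_on snd F"
        using assms(1) by (simp add: is_directed_forest_iff)
      have "(y, v) = (y', v)"
        by (rule inj_onD[OF inj _ y(2) step(2)]) simp
      then have "y = y'" by simp
      with y step "1" show ?thesis by blast
    qed
  qed
qed

lemma card_directed_forest_roots:
  assumes "is_directed_forest F" "F \<subseteq> V \<times> V" "finite V"
  shows "card (V - snd ` F) = card V - card F"
proof -
  have "card (snd ` F) = card F"
    using assms(1) by (simp add: card_image is_directed_forest_iff)
  moreover have "snd ` F \<subseteq> V" using assms(2) by auto
  ultimately show ?thesis
    by (metis assms(3) card_Diff_subset finite_subset)
qed

lemma sum_card_directed_forest_trees:
  assumes "is_directed_forest F" "F \<subseteq> V \<times> V" "finite V"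
  shows "(\<Sum>r \<in> V - snd ` F. card {v \<in> V. (r, v) \<in> F\<^sup>*}) = card V"
proof -
  have "finite F" using assms(2,3) finite_subset by blast
  have "(\<Union>r \<in> V - snd ` F. {v \<in> V. (r, v) \<in> F\<^sup>*}) = V"
    using directed_forest_root_exists[OF assms] by blast
  moreover have "card (\<Union>r \<in> V - snd ` F. {v \<in> V. (r, v) \<in> F\<^sup>*})
      = (\<Sum>r \<in> V - snd ` F. card {v \<in> V. (r, v) \<in> F\<^sup>*})"
    using directed_forest_root_unique[OF assms(1) \<open>finite F\<close>] assms(3)
    by (intro card_UN_disjoint) auto
  ultimately show ?thesis by simp
qed

lemma complete_digraph_subset: "complete_digraph n \<subseteq> {1..n} \<times> {1..n}"
  unfolding complete_digraph_def by auto

lemma finite_complete_digraph: "finite (complete_digraph n)"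
  using complete_digraph_subset finite_subset by blast

lemma card_directed_forest_extensions:
  assumes F: "F \<subseteq> complete_digraph n" "is_directed_forest F"
  shows "card {e \<in> complete_digraph n. e \<notin> F \<and> is_directed_forest (insert e F)}
           = n * (n - 1 - card F)"
proof -
  define V where "V = {1..n :: nat}"
  define R where "R = V - snd ` F"
  define T where "T r = {v \<in> V. (r, v) \<in> F\<^sup>*}" for r
  have FV: "F \<subseteq> V \<times> V" using F(1) complete_digraph_subset unfolding V_def by blast
  have "{e \<in> complete_digraph n. e \<notin> F \<and> is_directed_forest (insert e F)}
        = prod.swap ` (R \<times> V - Sigma R T)"
  proof (intro set_eqI iffI)
    fix e assume e: "e \<in> {e \<in> complete_digraph n. e \<notin> F \<and> is_directed_forest (insert e F)}"
    obtain x y where [simp]: "e = (x, y)" by fastforce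
    from e have "(x, y) \<notin> F" "is_directed_forest (insert (x, y) F)" by simp_all
    with F(2) have "y \<notin> snd ` F" "(y, x) \<notin> F\<^sup>*"
      by (simp_all add: is_directed_forest_insert)
    with e have "(y, x) \<in> R \<times> V - Sigma R T"
      unfolding R_def T_def V_def complete_digraph_def by auto
    then show "e \<in> prod.swap ` (R \<times> V - Sigma R T)"
      by (auto intro!: image_eqI[where x = "(y, x)"])
  next
    fix e assume "e \<in> prod.swap ` (R \<times> V - Sigma R T)"
    then obtain p where p: "p \<in> R \<times> V - Sigma R T" "e = prod.swap p"
      by blast
    obtain y x where [simp]: "p = (y, x)" by fastforce
    have [simp]: "e = (x, y)" using p(2) by simp
    from p(1) have "y \<in> V" "y \<notin> snd ` F" "x \<in> V" "(y, x) \<notin> F\<^sup>*"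
      unfolding R_def T_def by auto
    moreover from this have "(x, y) \<notin> F" by force
    ultimately show "e \<in> {e \<in> complete_digraph n. e \<notin> F \<and> is_directed_forest (insert e F)}"
      using F(2) by (auto simp: complete_digraph_def V_def is_directed_forest_insert)
  qed
  moreover have "card (Sigma R T) = n"
    using sum_card_directed_forest_trees[OF F(2) FV] by (simp add: R_def T_def V_def)
  moreover have "Sigma R T \<subseteq> R \<times> V" "finite (Sigma R T)"
    unfolding R_def T_def V_def by auto
  ultimately have "card {e \<in> complete_digraph n. e \<notin> F \<and> is_directed_forest (insert e F)}
                     = card R * n - n"
    by (simp add: card_image card_Diff_subset card_cartesian_product V_def)
  also have "\<dots> = n * (card R - 1)"
    by (simp add: diff_mult_distrib2 mult.commute)
  also have "card R = n - card F"
    using card_directed_forest_roots[OF F(2) FV] by (simp add: R_def V_def)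
  finally show ?thesis by simp
qed

lemma face_count_Suc_double_count:
  assumes "finite K" "\<And>F. F \<in> K \<Longrightarrow> finite F" "\<And>F e. F \<in> K \<Longrightarrow> F - {e} \<in> K"
  shows "Suc i * face_count K (Suc i)
           = (\<Sum>F \<in> {F \<in> K. card F = i}. card {e. e \<notin> F \<and> insert e F \<in> K})"
proof -
  define ext where "ext F = {e. e \<notin> F \<and> insert e F \<in> K}" for F
  have finite_ext: "finite (ext F)" for F
    by (rule finite_subset[of _ "\<Union>K"]) (auto simp: ext_def assms(1,2))
  have "bij_betw (\<lambda>(F, e). (F - {e}, e))
          (SIGMA F:{F \<in> K. card F = Suc i}. F) (SIGMA F:{F \<in> K. card F = i}. ext F)"
  proof (rule bij_betw_byWitness[where f' = "\<lambda>(F, e). (insert e F, e)"])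
    show "(\<lambda>(F, e). (F - {e}, e)) ` (SIGMA F:{F \<in> K. card F = Suc i}. F)
            \<subseteq> (SIGMA F:{F \<in> K. card F = i}. ext F)"
      using assms(2,3) by (auto simp: ext_def insert_absorb)
    show "(\<lambda>(F, e). (insert e F, e)) ` (SIGMA F:{F \<in> K. card F = i}. ext F)
            \<subseteq> (SIGMA F:{F \<in> K. card F = Suc i}. F)"
      using assms(2) by (auto simp: ext_def)
  qed (auto simp: ext_def insert_absorb)
  then have "card (SIGMA F:{F \<in> K. card F = Suc i}. F)
               = card (SIGMA F:{F \<in> K. card F = i}. ext F)"
    by (rule bij_betw_same_card)
  then show ?thesis
    using assms(1,2) finite_ext
    by (simp add: card_SigmaI face_count_def ext_def mult.commute)
qed

lemma finite_complex_of_directed_trees: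
  "finite (complex_of_directed_trees (complete_digraph n))"
  by (rule finite_subset[of _ "Pow (complete_digraph n)"])
     (auto simp: complex_of_directed_trees_def finite_complete_digraph)

lemma face_count_Suc_complete_digraph:
  "Suc i * face_count (complex_of_directed_trees (complete_digraph n)) (Suc i)
     = face_count (complex_of_directed_trees (complete_digraph n)) i * (n * (n - 1 - i))"
proof -
  define K where "K = complex_of_directed_trees (complete_digraph n)"
  have mem: "F \<in> K \<longleftrightarrow> F \<subseteq> complete_digraph n \<and> is_directed_forest F" for F
    by (simp add: K_def complex_of_directed_trees_def)
  have ext: "{e. e \<notin> F \<and> insert e F \<in> K}
               = {e \<in> complete_digraph n. e \<notin> F \<and> is_directed_forest (insert e F)}"
    if "F \<in> K" for F
    using that by (auto simp: mem)
  have "finite K"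
    unfolding K_def by (rule finite_complex_of_directed_trees)
  then have "Suc i * face_count K (Suc i)
          = (\<Sum>F \<in> {F \<in> K. card F = i}. card {e. e \<notin> F \<and> insert e F \<in> K})"
    by (intro face_count_Suc_double_count)
       (auto simp: mem finite_subset[OF _ finite_complete_digraph] intro: is_directed_forest_subset)
  also have "\<dots> = (\<Sum>F \<in> {F \<in> K. card F = i}. n * (n - 1 - i))"
  proof (rule sum.cong[OF refl])
    fix F assume F: "F \<in> {F \<in> K. card F = i}"
    then have "F \<subseteq> complete_digraph n" "is_directed_forest F" by (simp_all add: mem)
    then show "card {e. e \<notin> F \<and> insert e F \<in> K} = n * (n - 1 - i)"
      using F by (simp only: ext card_directed_forest_extensions mem_Collect_eq)
  qed
  finally show ?thesis by (simp add: K_def face_count_def)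
qed

lemma face_count_complete_digraph:
  "face_count (complex_of_directed_trees (complete_digraph n)) i = ((n - 1) choose i) * n ^ i"
proof (induction i)
  case 0
  have "{F \<in> complex_of_directed_trees (complete_digraph n). card F = 0} = {{}}"
    by (auto simp: complex_of_directed_trees_def is_directed_forest_empty
        finite_subset[OF _ finite_complete_digraph])
  then show ?case by (simp add: face_count_def)
next
  case (Suc i)
  have "Suc i * face_count (complex_of_directed_trees (complete_digraph n)) (Suc i)
          = ((n - 1 - i) * ((n - 1) choose i)) * n ^ Suc i"
    unfolding face_count_Suc_complete_digraph Suc.IH by (simp only: power_Suc mult_ac)
  also have "(n - 1 - i) * ((n - 1) choose i) = Suc i * ((n - 1) choose Suc i)"
    using binomial_absorb_comp[of "n - 1" i] binomial_absorption[of i "n - 1"] by simp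
  finally have "Suc i * face_count (complex_of_directed_trees (complete_digraph n)) (Suc i)
                  = Suc i * (((n - 1) choose Suc i) * n ^ Suc i)"
    by (simp only: mult.assoc)
  then show ?case by (simp only: mult_cancel1) simp
qed

lemma dim_plus_one_eqI:
  assumes "finite K" "\<And>i. face_count K i > 0 \<longleftrightarrow> i \<le> d"
  shows "dim_plus_one K = d"
proof -
  have "face_count K c > 0 \<longleftrightarrow> c \<in> card ` K" for c
    using assms(1) by (auto simp: face_count_def card_gt_0_iff)
  then show ?thesis
    unfolding dim_plus_one_def using assms by (intro Max_eqI) auto
qed

lemma h_vector_of_binomial_face_counts:
  assumes "dim_plus_one K = m" "\<And>i. face_count K i = (m choose i) * a ^ i" "k \<le> m"
  shows "h_vector K k = int (m choose k) * (int a - 1) ^ k"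
proof -
  have choose: "int ((m - i) choose (m - k)) * int (m choose i) = int (m choose k) * int (k choose i)"
    if "i \<le> k" for i
  proof -
    have "(m - i) choose (m - k) = (m - i) choose (k - i)"
      using binomial_symmetric[of "k - i" "m - i"] that assms(3) by simp
    then show ?thesis
      using choose_mult[OF that assms(3)] by (metis mult.commute of_nat_mult)
  qed
  have "h_vector K k
          = (\<Sum>i\<le>k. int (m choose k) * (int (k choose i) * int a ^ i * (-1) ^ (k - i)))"
    unfolding h_vector_def assms(1,2) atLeast0AtMost
    by (intro sum.cong refl) (simp add: algebra_simps choose[simplified algebra_simps])
  also have "\<dots> = int (m choose k) * (\<Sum>i\<le>k. of_nat (k choose i) * int a ^ i * (-1) ^ (k - i))"
    by (simp add: sum_distrib_left)
  also have "\<dots> = int (m choose k) * (int a + (-1)) ^ k"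
    by (simp only: binomial_ring)
  finally show ?thesis by simp
qed

theorem mainTheorem1:
  fixes n k :: nat
  assumes "n \<ge> 1" and "k \<le> n - 1"
  shows "h_vector (complex_of_directed_trees (complete_digraph n)) k
           = int ((n - 1) choose k) * int (n - 1) ^ k"
proof -
  have "dim_plus_one (complex_of_directed_trees (complete_digraph n)) = n - 1"
    using assms(1) finite_complex_of_directed_trees
    by (intro dim_plus_one_eqI) (auto simp: face_count_complete_digraph)
  then show ?thesis
    using h_vector_of_binomial_face_counts[OF _ face_count_complete_digraph assms(2)] assms(1)
    by (simp add: of_nat_diff)
qed

end
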